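(* Let $X$ be a second countable locally compact Abelian group containing no nonzero compact subgroups. Let $\xi_1,\xi_2$ be independent identically distributed random variables with values in $X$ and a symmetric distribution $\mu$. Let $\alpha$ be a random variable with a Bernoulli distribution taking the values $0$ and $1$ with probability $\frac12$ each, independent of $(\xi_1,\xi_2)$. Then the following are equivalent: (i) the linear forms $2\alpha\xi_1$ and $\xi_1+\xi_2$ are identically distributed; (ii) there is $x_0\in X$ such that $\mu=\frac12\left(E_{x_0}+E_{-x_0}\right)$.
   Context: A distribution is symmetric if $\mu(B)=\mu(-B)$ for all Borel $B$. $E_x$ denotes the point mass at $x$. *)

theory Defs
  imports "HOL-Probability.Probability"
begin

definition gmul :: "nat \<Rightarrow> 'a::ab_group_add \<Rightarrow> 'a" where
  "gmul n x = (\<Sum>i<n. x)"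

definition is_subgroup :: "'a::ab_group_add set \<Rightarrow> bool" where
  "is_subgroup K \<longleftrightarrow> 0 \<in> K \<and> (\<forall>x\<in>K. \<forall>y\<in>K. x + y \<in> K) \<and> (\<forall>x\<in>K. - x \<in> K)"

definition no_nonzero_compact_subgroups :: "'a::{ab_group_add,topological_space} itself \<Rightarrow> bool" where
  "no_nonzero_compact_subgroups _ \<longleftrightarrow>
     (\<forall>K::'a set. is_subgroup K \<and> compact K \<longrightarrow> K = {0})"

definition symmetric_distr :: "'a::{ab_group_add,topological_space} measure \<Rightarrow> bool" where
  "symmetric_distr \<mu> \<longleftrightarrow> (\<forall>B\<in>sets borel. emeasure \<mu> B = emeasure \<mu> (uminus ` B))"

end

theory Submission
  imports Defs
begin

(* Write mu{x} for the mass of the atom at x, and test both laws on {0}. The group has no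
   element of order two (the subgroup {0, x} would be compact), so 2 alpha xi1 = 0 exactly when
   alpha = 0 or xi1 = 0, an event of probability (1 + mu{0})/2. By independence and symmetry,
   P(xi1 + xi2 = 0) is the integral of mu{x} d mu(x), an average of atom masses; hence some atom
   x0 has mass at least 1/2. If x0 <> 0, the distinct points x0 and -x0 carry equal masses, so
   both carry exactly 1/2. If x0 = 0, no atom weighs more than mu{0}, and (1 + mu{0})/2 <= mu{0}
   forces mu = E_0. Conversely, for mu = (E_x0 + E_-x0)/2 both laws equal
   (2 E_0 + E_2x0 + E_-2x0)/4. *)

lemma no_nonzero_compact_subgroups_double_eq_0:
  fixes x :: "'a::topological_ab_group_add"
  assumes "no_nonzero_compact_subgroups TYPE('a)" and "x + x = 0"
  shows "x = 0"
proof -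
  have "- x = x" using assms(2) by (metis add_eq_0_iff2)
  then have "is_subgroup {0, x}" unfolding is_subgroup_def using assms(2) by auto
  moreover have "compact {0, x}" by (rule finite_imp_compact) simp
  ultimately have "{0, x} = {0}"
    using assms(1) unfolding no_nonzero_compact_subgroups_def by blast
  then show ?thesis by auto
qed

lemma gmul_double_bit: "n \<in> {0, 1} \<Longrightarrow> gmul (2 * n) x = (if n = 0 then 0 else x + x)"
  by (auto simp: gmul_def numeral_2_eq_2)

lemma sets_borel_Collect_continuous:
  assumes "continuous_on UNIV f" and "B \<in> sets borel"
  shows "{x. f x \<in> B} \<in> sets borel"
  using measurable_sets[OF borel_measurable_continuous_onI[OF assms(1)] assms(2)]
  by (simp add: vimage_def)

lemma sets_pair_borel_Collect_add:
  fixes B :: "'a::{topological_monoid_add, second_countable_topology} set"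
  assumes "B \<in> sets borel"
  shows "{p::'a \<times> 'a. fst p + snd p \<in> B} \<in> sets (borel \<Otimes>\<^sub>M borel)"
  unfolding borel_prod using assms by (intro sets_borel_Collect_continuous continuous_intros)

lemma symmetric_distr_measure_singleton:
  fixes \<mu> :: "'a::{ab_group_add, t1_space} measure"
  assumes "symmetric_distr \<mu>"
  shows "measure \<mu> {- x} = measure \<mu> {x}"
  using assms unfolding symmetric_distr_def measure_def
  by (metis closed_singleton borel_closed image_empty image_insert)

lemma nn_integral_finite_support:
  assumes "finite S" and "AE x in N. x \<in> S" and "\<And>x. x \<in> S \<Longrightarrow> {x} \<in> sets N"
  shows "(\<integral>\<^sup>+x. f x \<partial>N) = (\<Sum>x\<in>S. f x * emeasure N {x})"
proof -
  have "(\<integral>\<^sup>+x. f x \<partial>N) = (\<integral>\<^sup>+x. f x * indicator S x \<partial>N)"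
    using assms(2) by (intro nn_integral_cong_AE) (auto elim!: eventually_mono)
  also have "\<dots> = (\<Sum>x\<in>S. f x * emeasure N {x})"
    using assms(1,3) by (rule nn_integral_indicator_finite)
  finally show ?thesis .
qed

lemma measure_two_point_support:
  fixes N :: "'a::t1_space measure"
  assumes "prob_space N" and "sets N = sets borel"
    and "AE x in N. x \<in> {a, b}" and "measure N {a} = measure N {b}" and "B \<in> sets borel"
  shows "measure N B = (indicator B a + indicator B b) / 2"
proof -
  interpret prob_space N by fact
  have sets: "B \<inter> {a, b} \<in> events" "{a} \<in> events" "{b} \<in> events" "{a, b} \<in> events"
    using assms(2,5) by (auto simp: finite_imp_closed)
  have "prob {a, b} = 1"
    using assms(3) sets(4) by (simp add: prob_eq_1)
  moreover have "prob {a, b} = prob {a} + prob {b}" if "a \<noteq> b"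
    using that sets by (subst measure_eq_sum_singleton) auto
  ultimately have atom: "prob {a} = (if a = b then 1 else 1/2)"
    using assms(4) by auto
  have "prob B = prob (B \<inter> {a, b})"
    using assms(3) sets(1) assms(2,5) by (intro measure_eq_AE) (auto elim!: eventually_mono)
  also have "\<dots> = (\<Sum>x\<in>B \<inter> {a, b}. prob {x})"
    using assms(2) by (intro measure_eq_sum_singleton) auto
  finally show ?thesis
    using atom assms(4) by (cases "a \<in> B"; cases "b \<in> B"; cases "a = b") (auto simp: Int_insert_left)
qed

lemma nn_integral_two_point:
  fixes N :: "'a::t1_space measure" and f :: "'a \<Rightarrow> real"
  assumes "prob_space N" and "sets N = sets borel"
    and two_point: "\<forall>B\<in>sets borel. measure N B = (indicator B a + indicator B b) / 2"
    and "\<And>x. 0 \<le> f x"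
  shows "(\<integral>\<^sup>+x. f x \<partial>N) = ennreal ((f a + f b) / 2)"
proof -
  interpret prob_space N by fact
  have "prob {a, b} = 1"
    using two_point[rule_format, of "{a, b}"] by (simp add: finite_imp_closed)
  then have "AE x in N. x \<in> {a, b}"
    by (rule AE_prob_1)
  then have "(\<integral>\<^sup>+x. f x \<partial>N) = (\<Sum>x\<in>{a, b}. ennreal (f x) * emeasure N {x})"
    using assms(2) by (intro nn_integral_finite_support) auto
  also have "\<dots> = ennreal (\<Sum>x\<in>{a, b}. f x * prob {x})"
    using assms(4) by (simp add: emeasure_eq_measure sum_ennreal ennreal_mult'[symmetric])
  also have "(\<Sum>x\<in>{a, b}. f x * prob {x}) = (f a + f b) / 2"
    using two_point[rule_format, of "{a}"] two_point[rule_format, of "{b}"]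
    by (cases "a = b") (auto simp: mult.assoc)
  finally show ?thesis .
qed

lemma (in prob_space) ex_ge_of_le_nn_integral:
  assumes "f \<in> borel_measurable M" and "ennreal c \<le> (\<integral>\<^sup>+x. f x \<partial>M)"
  shows "\<exists>x\<in>space M. ennreal c \<le> f x"
proof (rule ccontr)
  assume "\<not> ?thesis"
  then have less: "\<forall>x\<in>space M. f x < c" by (simp add: not_le)
  have const: "(\<integral>\<^sup>+x. ennreal c \<partial>M) = ennreal c"
    by (simp add: emeasure_space_1)
  have "(\<integral>\<^sup>+x. f x \<partial>M) < (\<integral>\<^sup>+x. c \<partial>M)"
  proof (rule nn_integral_less)
    have "(\<integral>\<^sup>+x. f x \<partial>M) \<le> (\<integral>\<^sup>+x. c \<partial>M)"
      using less by (intro nn_integral_mono) (simp add: less_imp_le)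
    then show "(\<integral>\<^sup>+x. f x \<partial>M) \<noteq> \<infinity>"
      using const by (auto simp: top_unique)
    show "\<not> (AE x in M. c \<le> f x)"
    proof
      assume "AE x in M. c \<le> f x"
      from this AE_space have "AE x in M. False"
        by eventually_elim (use less in \<open>auto simp: not_le[symmetric]\<close>)
      then show False by simp
    qed
  qed (use assms(1) less in \<open>auto intro: less_imp_le\<close>)
  then show False
    using assms(2) emeasure_space_1 by simp
qed

lemma measurable_emeasure_translate:
  fixes \<mu> :: "'a::{topological_monoid_add, second_countable_topology} measure"
  assumes "sigma_finite_measure \<mu>" and "sets \<mu> = sets borel" and "B \<in> sets borel"
  shows "(\<lambda>x. emeasure \<mu> {y. x + y \<in> B}) \<in> borel_measurable borel"
proof -
  have "{p. fst p + snd p \<in> B} \<in> sets (borel \<Otimes>\<^sub>M \<mu>)"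
    using sets_pair_borel_Collect_add[OF assms(3)] by (simp add: sets_pair_measure_cong[OF refl assms(2)])
  from sigma_finite_measure.measurable_emeasure_Pair[OF assms(1) this] show ?thesis
    by (simp add: vimage_def)
qed

lemma ex_two_point_support_of_atom_integral:
  fixes \<mu> :: "'a::{ab_group_add, t1_space} measure"
  assumes "prob_space \<mu>" and sets: "sets \<mu> = sets borel"
    and atom_meas: "(\<lambda>x. ennreal (measure \<mu> {x})) \<in> borel_measurable \<mu>"
    and symmetric: "\<And>x. measure \<mu> {- x} = measure \<mu> {x}"
    and torsion_free: "\<And>x::'a. x + x = 0 \<Longrightarrow> x = 0"
    and atom_integral: "(\<integral>\<^sup>+x. measure \<mu> {x} \<partial>\<mu>) = ennreal ((1 + measure \<mu> {0}) / 2)"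
  shows "\<exists>x0. AE x in \<mu>. x \<in> {x0, - x0}"
proof -
  interpret prob_space \<mu> by fact
  have pair: "prob {a, b} = prob {a} + prob {b}" if "a \<noteq> b" for a b
    using that sets by (subst measure_eq_sum_singleton) auto
  have "ennreal (1/2) \<le> (\<integral>\<^sup>+x. measure \<mu> {x} \<partial>\<mu>)"
    unfolding atom_integral by (intro ennreal_leI) simp
  from ex_ge_of_le_nn_integral[OF atom_meas this]
  obtain x0 where "ennreal (1/2) \<le> ennreal (prob {x0})"
    by auto
  then have x0: "1/2 \<le> prob {x0}"
    by (subst (asm) ennreal_le_iff) simp_all
  have "prob {x0, - x0} = 1"
  proof (cases "x0 = 0")
    case True
    have "prob {x} \<le> prob {0}" for x
    proof (cases "x = 0")
      case False
      then have "prob {x} + prob {0} \<le> 1"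
        using pair[of x 0] prob_le_1[of "{x, 0}"] by simp
      then show ?thesis using x0 True by simp
    qed simp
    then have "(\<integral>\<^sup>+x. measure \<mu> {x} \<partial>\<mu>) \<le> (\<integral>\<^sup>+x. prob {0} \<partial>\<mu>)"
      by (intro nn_integral_mono ennreal_leI)
    then have "(1 + prob {0}) / 2 \<le> prob {0}"
      unfolding atom_integral by (simp add: emeasure_space_1)
    then show ?thesis
      using True prob_le_1[of "{0}"] by simp
  next
    case False
    then have "x0 \<noteq> - x0"
      using torsion_free[of x0] by (auto simp: eq_neg_iff_add_eq_0)
    then show ?thesis
      using pair[of x0 "- x0"] symmetric[of x0] x0 prob_le_1[of "{x0, - x0}"] by simp
  qed
  then have "AE x in \<mu>. x \<in> {x0, - x0}"
    by (rule AE_prob_1)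
  then show ?thesis ..
qed

lemma nn_integral_translate_two_point:
  fixes \<mu> :: "'a::{topological_ab_group_add, t1_space} measure"
  assumes "prob_space \<mu>" and "sets \<mu> = sets borel"
    and two_point: "\<forall>B\<in>sets borel. measure \<mu> B = (indicator B x0 + indicator B (- x0)) / 2"
    and B: "B \<in> sets borel"
  shows "(\<integral>\<^sup>+x. emeasure \<mu> {y. x + y \<in> B} \<partial>\<mu>) =
    ennreal ((indicator B 0 + measure \<mu> {x. x + x \<in> B}) / 2)"
proof -
  interpret prob_space \<mu> by fact
  have shifted: "{y. x + y \<in> B} \<in> sets borel" for x
    using B by (intro sets_borel_Collect_continuous continuous_intros)
  have doubled: "{y. y + y \<in> B} \<in> sets borel"
    using B by (intro sets_borel_Collect_continuous continuous_intros)
  have "(\<integral>\<^sup>+x. emeasure \<mu> {y. x + y \<in> B} \<partial>\<mu>) = (\<integral>\<^sup>+x. measure \<mu> {y. x + y \<in> B} \<partial>\<mu>)"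
    by (simp add: emeasure_eq_measure)
  also have "\<dots> = ennreal ((measure \<mu> {y. x0 + y \<in> B} + measure \<mu> {y. - x0 + y \<in> B}) / 2)"
    using nn_integral_two_point[OF assms(1,2) two_point, of "\<lambda>x. measure \<mu> {y. x + y \<in> B}"]
    by simp
  also have "\<dots> = ennreal ((indicator B 0 + measure \<mu> {x. x + x \<in> B}) / 2)"
    using two_point[rule_format, OF shifted[of x0]] two_point[rule_format, OF shifted[of "- x0"]]
      two_point[rule_format, OF doubled]
    by (simp add: indicator_def field_simps)
  finally show ?thesis .
qed

lemma self_convolution_eq_coin_doubling_iff_two_point:
  fixes \<mu> :: "'a::{topological_ab_group_add, second_countable_topology, t1_space} measure"
  assumes \<mu>: "prob_space \<mu>" "sets \<mu> = sets borel" and "symmetric_distr \<mu>"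
    and torsion_free: "\<And>x::'a. x + x = 0 \<Longrightarrow> x = 0"
  shows "(\<forall>B\<in>sets borel. (\<integral>\<^sup>+x. emeasure \<mu> {y. x + y \<in> B} \<partial>\<mu>) =
            ennreal ((indicator B 0 + measure \<mu> {x. x + x \<in> B}) / 2)) \<longleftrightarrow>
         (\<exists>x0. \<forall>B\<in>sets borel. measure \<mu> B = (indicator B x0 + indicator B (- x0)) / 2)"
proof
  interpret prob_space \<mu> by fact
  have symmetric: "prob {- x} = prob {x}" for x
    using assms(3) by (rule symmetric_distr_measure_singleton)
  assume conv: "\<forall>B\<in>sets borel. (\<integral>\<^sup>+x. emeasure \<mu> {y. x + y \<in> B} \<partial>\<mu>) =
    ennreal ((indicator B 0 + prob {x. x + x \<in> B}) / 2)"
  have atom: "emeasure \<mu> {y. x + y \<in> {0}} = ennreal (prob {x})" for x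
  proof -
    have "{y. x + y \<in> {0}} = {- x}"
      by (auto simp: add_eq_0_iff)
    then show ?thesis
      using symmetric by (simp add: emeasure_eq_measure)
  qed
  have "(\<lambda>x. emeasure \<mu> {y. x + y \<in> {0}}) \<in> borel_measurable borel"
    using \<mu>(2) by (intro measurable_emeasure_translate) (auto simp: prob_space_imp_sigma_finite \<mu>(1))
  then have atom_measurable: "(\<lambda>x. ennreal (prob {x})) \<in> borel_measurable \<mu>"
    unfolding atom measurable_cong_sets[OF \<mu>(2) refl] .
  have "{x::'a. x + x \<in> {0}} = {0}"
    by (auto dest: torsion_free)
  then have "(\<integral>\<^sup>+x. emeasure \<mu> {y. x + y \<in> {0}} \<partial>\<mu>) = ennreal ((1 + prob {0}) / 2)"
    using conv[rule_format, of "{0}"] by simp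
  then have "(\<integral>\<^sup>+x. prob {x} \<partial>\<mu>) = ennreal ((1 + prob {0}) / 2)"
    by (simp only: atom)
  from ex_two_point_support_of_atom_integral[OF \<mu> atom_measurable symmetric torsion_free this]
  obtain x0 where support: "AE x in \<mu>. x \<in> {x0, - x0}" ..
  show "\<exists>x0. \<forall>B\<in>sets borel. prob B = (indicator B x0 + indicator B (- x0)) / 2"
    using measure_two_point_support[OF \<mu> support symmetric[of x0, symmetric]] by (intro exI ballI)
next
  assume "\<exists>x0. \<forall>B\<in>sets borel. measure \<mu> B = (indicator B x0 + indicator B (- x0)) / 2"
  then obtain x0 where two_point: "\<forall>B\<in>sets borel. measure \<mu> B = (indicator B x0 + indicator B (- x0)) / 2" ..
  show "\<forall>B\<in>sets borel. (\<integral>\<^sup>+x. emeasure \<mu> {y. x + y \<in> B} \<partial>\<mu>) =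
    ennreal ((indicator B 0 + measure \<mu> {x. x + x \<in> B}) / 2)"
    using nn_integral_translate_two_point[OF \<mu> two_point] by (intro ballI)
qed

lemma (in prob_space) emeasure_distr_add_indep_var:
  fixes X Y :: "'a \<Rightarrow> 'b::{topological_monoid_add, second_countable_topology}"
  assumes "indep_var borel X borel Y" and "B \<in> sets borel"
  shows "emeasure (distr M borel (\<lambda>\<omega>. X \<omega> + Y \<omega>)) B =
    (\<integral>\<^sup>+x. emeasure (distr M borel Y) {y. x + y \<in> B} \<partial>distr M borel X)"
proof -
  have X: "X \<in> borel_measurable M" and Y: "Y \<in> borel_measurable M"
    and joint: "distr M (borel \<Otimes>\<^sub>M borel) (\<lambda>\<omega>. (X \<omega>, Y \<omega>)) = distr M borel X \<Otimes>\<^sub>M distr M borel Y"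
    using assms(1) unfolding indep_var_distribution_eq by auto
  define D where "D = {p :: 'b \<times> 'b. fst p + snd p \<in> B}"
  have D: "D \<in> sets (borel \<Otimes>\<^sub>M borel)"
    unfolding D_def using assms(2) by (rule sets_pair_borel_Collect_add)
  have "emeasure (distr M borel (\<lambda>\<omega>. X \<omega> + Y \<omega>)) B =
      emeasure (distr M (borel \<Otimes>\<^sub>M borel) (\<lambda>\<omega>. (X \<omega>, Y \<omega>))) D"
    using X Y D assms(2) by (simp add: emeasure_distr D_def vimage_def Int_def conj_commute)
  also have "\<dots> = (\<integral>\<^sup>+x. emeasure (distr M borel Y) (Pair x -` D) \<partial>distr M borel X)"
    unfolding joint using D prob_space_distr[OF Y]
    by (intro sigma_finite_measure.emeasure_pair_measure_alt) (auto simp: prob_space_imp_sigma_finite)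
  finally show ?thesis
    by (simp add: D_def vimage_def)
qed

lemma (in prob_space) indep_set_pair_vimageD:
  assumes "indep_set
      (sigma_sets (space M) {(\<lambda>\<omega>. (X \<omega>, Y \<omega>)) -` A \<inter> space M | A. A \<in> sets (N1 \<Otimes>\<^sub>M N2)})
      (sigma_sets (space M) {\<alpha> -` A \<inter> space M | A. A \<in> sets (count_space UNIV)})"
    and "Y \<in> measurable M N2" and "A \<in> sets N1"
  shows "prob ({\<omega>\<in>space M. X \<omega> \<in> A} \<inter> {\<omega>\<in>space M. \<alpha> \<omega> = k}) =
    prob {\<omega>\<in>space M. X \<omega> \<in> A} * prob {\<omega>\<in>space M. \<alpha> \<omega> = k}"
proof (rule indep_setD[OF assms(1)])
  have "{\<omega>\<in>space M. X \<omega> \<in> A} = (\<lambda>\<omega>. (X \<omega>, Y \<omega>)) -` (A \<times> space N2) \<inter> space M"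
    using measurable_space[OF assms(2)] by auto
  moreover have "A \<times> space N2 \<in> sets (N1 \<Otimes>\<^sub>M N2)"
    using assms(3) by (intro pair_measureI) auto
  ultimately show "{\<omega>\<in>space M. X \<omega> \<in> A} \<in> sigma_sets (space M)
      {(\<lambda>\<omega>. (X \<omega>, Y \<omega>)) -` A \<inter> space M | A. A \<in> sets (N1 \<Otimes>\<^sub>M N2)}"
    by (intro sigma_sets.Basic) blast
  have "{\<omega>\<in>space M. \<alpha> \<omega> = k} = \<alpha> -` {k} \<inter> space M"
    by auto
  then show "{\<omega>\<in>space M. \<alpha> \<omega> = k} \<in> sigma_sets (space M)
      {\<alpha> -` A \<inter> space M | A. A \<in> sets (count_space UNIV)}"
    by (intro sigma_sets.Basic) auto
qed

lemma (in prob_space) emeasure_distr_gmul_fair_coin: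
  fixes X :: "'a \<Rightarrow> 'b::{topological_ab_group_add, second_countable_topology}"
    and \<alpha> :: "'a \<Rightarrow> nat"
  assumes X: "X \<in> borel_measurable M" and \<alpha>: "\<alpha> \<in> measurable M (count_space UNIV)"
    and coin: "\<forall>\<omega>\<in>space M. \<alpha> \<omega> \<in> {0, 1}"
    "prob {\<omega>\<in>space M. \<alpha> \<omega> = 0} = 1/2" "prob {\<omega>\<in>space M. \<alpha> \<omega> = 1} = 1/2"
    and indep: "\<And>A. A \<in> sets borel \<Longrightarrow>
      prob ({\<omega>\<in>space M. X \<omega> \<in> A} \<inter> {\<omega>\<in>space M. \<alpha> \<omega> = 1}) =
      prob {\<omega>\<in>space M. X \<omega> \<in> A} * prob {\<omega>\<in>space M. \<alpha> \<omega> = 1}"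
    and B: "B \<in> sets borel"
  shows "emeasure (distr M borel (\<lambda>\<omega>. gmul (2 * \<alpha> \<omega>) (X \<omega>))) B =
    ennreal ((indicator B 0 + measure (distr M borel X) {x. x + x \<in> B}) / 2)"
proof -
  have coin_scaled: "gmul (2 * \<alpha> \<omega>) (X \<omega>) = (if \<alpha> \<omega> = 0 then 0 else X \<omega> + X \<omega>)"
    if "\<omega> \<in> space M" for \<omega>
    using coin(1) that by (simp add: gmul_double_bit)
  have "(\<lambda>\<omega>. if \<alpha> \<omega> = 0 then 0 else X \<omega> + X \<omega>) \<in> borel_measurable M"
    using \<alpha> X by measurable
  then have Z: "(\<lambda>\<omega>. gmul (2 * \<alpha> \<omega>) (X \<omega>)) \<in> borel_measurable M"
    by (rule measurable_cong[THEN iffD1, rotated]) (simp add: coin_scaled)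
  have doubled: "{x. x + x \<in> B} \<in> sets borel"
    using B by (intro sets_borel_Collect_continuous continuous_intros)
  have events: "{\<omega>\<in>space M. \<alpha> \<omega> = 0 \<and> 0 \<in> B} \<in> events" "{\<omega>\<in>space M. \<alpha> \<omega> = 1} \<in> events"
    "{\<omega>\<in>space M. X \<omega> \<in> {x. x + x \<in> B}} \<in> events"
    using \<alpha> X doubled by measurable
  have "emeasure (distr M borel (\<lambda>\<omega>. gmul (2 * \<alpha> \<omega>) (X \<omega>))) B =
      prob {\<omega>\<in>space M. (if \<alpha> \<omega> = 0 then 0 else X \<omega> + X \<omega>) \<in> B}"
    using Z B by (simp add: emeasure_distr emeasure_eq_measure vimage_def Int_def conj_commute coin_scaled
      cong: conj_cong)
  also have "{\<omega>\<in>space M. (if \<alpha> \<omega> = 0 then 0 else X \<omega> + X \<omega>) \<in> B} =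
      {\<omega>\<in>space M. \<alpha> \<omega> = 0 \<and> 0 \<in> B} \<union>
      ({\<omega>\<in>space M. X \<omega> \<in> {x. x + x \<in> B}} \<inter> {\<omega>\<in>space M. \<alpha> \<omega> = 1})"
    using coin(1) by fastforce
  also have "prob \<dots> = prob {\<omega>\<in>space M. \<alpha> \<omega> = 0 \<and> 0 \<in> B} +
      prob ({\<omega>\<in>space M. X \<omega> \<in> {x. x + x \<in> B}} \<inter> {\<omega>\<in>space M. \<alpha> \<omega> = 1})"
    using events by (auto intro!: finite_measure_Union)
  also have "\<dots> = (indicator B 0 + measure (distr M borel X) {x. x + x \<in> B}) / 2"
    using coin(2,3) indep[OF doubled] X doubled by (simp add: indicator_def measure_distr vimage_def Int_def conj_commute)
  finally show ?thesis .
qed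

theorem theorem4p2:
  fixes M :: "'b measure"
    and \<xi>1 \<xi>2 :: "'b \<Rightarrow> 'a::{topological_ab_group_add, second_countable_topology, t2_space}"
    and \<alpha> :: "'b \<Rightarrow> nat"
    and \<mu> :: "'a measure"
  assumes "prob_space M"
    and "locally_compact_space (euclidean :: 'a topology)"
    and "no_nonzero_compact_subgroups TYPE('a)"
    and "\<xi>1 \<in> borel_measurable M" and "\<xi>2 \<in> borel_measurable M"
    and "\<alpha> \<in> measurable M (count_space UNIV)"
    and "prob_space.indep_var M borel \<xi>1 borel \<xi>2"
    and "prob_space.indep_set M
           (sigma_sets (space M) {(\<lambda>\<omega>. (\<xi>1 \<omega>, \<xi>2 \<omega>)) -` A \<inter> space M | A. A \<in> sets (borel \<Otimes>\<^sub>M borel)})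
           (sigma_sets (space M) {\<alpha> -` A \<inter> space M | A. A \<in> sets (count_space UNIV)})"
    and "distr M borel \<xi>1 = \<mu>" and "distr M borel \<xi>2 = \<mu>"
    and "symmetric_distr \<mu>"
    and "\<forall>\<omega>\<in>space M. \<alpha> \<omega> \<in> {0, 1}"
    and "measure M {\<omega>\<in>space M. \<alpha> \<omega> = 0} = 1/2"
    and "measure M {\<omega>\<in>space M. \<alpha> \<omega> = 1} = 1/2"
  shows "distr M borel (\<lambda>\<omega>. gmul (2 * \<alpha> \<omega>) (\<xi>1 \<omega>)) = distr M borel (\<lambda>\<omega>. \<xi>1 \<omega> + \<xi>2 \<omega>)
     \<longleftrightarrow> (\<exists>x0. \<forall>B\<in>sets borel.
            measure \<mu> B = (measure (return borel x0) B + measure (return borel (- x0)) B) / 2)"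
proof -
  interpret prob_space M by fact
  have \<mu>: "prob_space \<mu>" "sets \<mu> = sets borel"
    using prob_space_distr[OF assms(4)] assms(9) by auto
  have torsion_free: "\<And>x::'a. x + x = 0 \<Longrightarrow> x = 0"
    using no_nonzero_compact_subgroups_double_eq_0[OF assms(3)] .
  have doubling: "emeasure (distr M borel (\<lambda>\<omega>. gmul (2 * \<alpha> \<omega>) (\<xi>1 \<omega>))) B =
      ennreal ((indicator B 0 + measure \<mu> {x. x + x \<in> B}) / 2)" if "B \<in> sets borel" for B
    using emeasure_distr_gmul_fair_coin[OF assms(4,6,12,13,14) indep_set_pair_vimageD[OF assms(8,5)] that]
      assms(9) by simp
  have sum: "emeasure (distr M borel (\<lambda>\<omega>. \<xi>1 \<omega> + \<xi>2 \<omega>)) B = (\<integral>\<^sup>+x. emeasure \<mu> {y. x + y \<in> B} \<partial>\<mu>)"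
    if "B \<in> sets borel" for B
    using emeasure_distr_add_indep_var[OF assms(7) that] assms(9,10) by simp
  have "distr M borel (\<lambda>\<omega>. gmul (2 * \<alpha> \<omega>) (\<xi>1 \<omega>)) = distr M borel (\<lambda>\<omega>. \<xi>1 \<omega> + \<xi>2 \<omega>) \<longleftrightarrow>
      (\<forall>B\<in>sets borel. emeasure (distr M borel (\<lambda>\<omega>. gmul (2 * \<alpha> \<omega>) (\<xi>1 \<omega>))) B =
        emeasure (distr M borel (\<lambda>\<omega>. \<xi>1 \<omega> + \<xi>2 \<omega>)) B)"
    by (auto intro: measure_eqI)
  also have "\<dots> \<longleftrightarrow> (\<forall>B\<in>sets borel. (\<integral>\<^sup>+x. emeasure \<mu> {y. x + y \<in> B} \<partial>\<mu>) =
      ennreal ((indicator B 0 + measure \<mu> {x. x + x \<in> B}) / 2))"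
    by (auto simp: doubling sum)
  also have "\<dots> \<longleftrightarrow> (\<exists>x0. \<forall>B\<in>sets borel. measure \<mu> B = (indicator B x0 + indicator B (- x0)) / 2)"
    by (rule self_convolution_eq_coin_doubling_iff_two_point[OF \<mu> assms(11) torsion_free])
  finally show ?thesis
    by (simp add: measure_return)
qed

end
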